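(* Let $t\ge3$ be an integer. Every $t$-mansion is $(2P_3,C_4,C_6,C_7,T_0)$-free and contains an induced $t$-pentagon. Moreover, every $t$-mansion is anticonnected and contains no simplicial and no universal vertices.
   Context: Graphs are finite, simple, nonnull. A graph is $(H_1,\dots,H_m)$-free if it has no induced subgraph isomorphic to any $H_i$. $P_k$, $C_k$ are the path and cycle on $k$ vertices; $2P_3$ is two disjoint copies of $P_3$. $T_0$ is the graph with vertices $p,q,u_0,u_1,u_2,u_3,w_1,w_2,w_3$ and edges $pq,pu_0,pu_2,pu_3,qu_1,qu_2,qu_3,u_0w_1,u_1w_1,u_2w_2,u_3w_3,w_1w_2,w_1w_3,w_2w_3$. For $t\ge3$ the $t$-pentagon is the graph on vertices $a,b_1,\dots,b_t,c_1,\dots,c_t$ where $a$ is adjacent to every $b_i$ and to no $c_i$, $\{b_1,\dots,b_t\}$ is stable, $\{c_1,\dots,c_t\}$ is a clique, and $b_ic_j$ is an edge iff $i=j$. A graph is anticonnected if its complement is connected. A vertex is simplicial if its neighbours form a (possibly empty) clique, universal if adjacent to all other vertices. For disjoint vertex sets $X,Y$, $X$ is complete (anticomplete) to $Y$ if every vertex of $X$ is adjacent (nonadjacent) to every vertex of $Y$. $t$-villa: a graph whose vertex set partitions into nonempty cliques $A,B_1,\dots,B_t,C_1,\dots,C_t$ such that $A$ is complete to $B_1\cup\dots\cup B_t$ and anticomplete to $C_1\cup\dots\cup C_t$; the $B_i$ are pairwise anticomplete; the $C_i$ are pairwise complete; $B_i$ is anticomplete to $C_j$ for $i\ne j$; each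 $B_i$ can be ordered $b^i_1,\dots,b^i_{r_i}$ with $\emptyset\ne N(b^i_{r_i})\cap C_i\subseteq\dots\subseteq N(b^i_1)\cap C_i=C_i$; this is a $t$-villa partition $(A;B_1,\dots,B_t;C_1,\dots,C_t)$. $t$-mansion: a graph $Q$ whose vertex set partitions into cliques $A,B_1,\dots,B_t,C_1,\dots,C_t,F,X,Y$, with $A,B_i,C_i,F$ nonempty ($X,Y$ possibly empty), such that $Q[A\cup B_1\cup\dots\cup B_t\cup C_1\cup\dots\cup C_t]$ is a $t$-villa with $t$-villa partition $(A;B_1,\dots,B_t;C_1,\dots,C_t)$; there is $j^*\in\{1,\dots,t\}$ such that $F$ is complete to $A$, to $\bigcup_{i\ne j^*}B_i$ and to $\bigcup_{i\ne j^*}C_i$ and anticomplete to $B_{j^*}\cup C_{j^*}$, $B_{j^*}$ is complete to $C_{j^*}$, and $X$ is complete to $A\cup B_{j^*}$ and anticomplete to $\bigcup_{i\ne j^*}B_i$ and to $C_1\cup\dots\cup C_t$; $F$ is complete to $X\cup Y$; $X$ is anticomplete to $Y$; $Y$ is complete to $C_1\cup\dots\cup C_t$ and anticomplete to $A\cup B_1\cup\dots\cup B_t$. *)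

theory Defs
  imports Main
begin

definition graph :: "'a set \<Rightarrow> ('a \<Rightarrow> 'a \<Rightarrow> bool) \<Rightarrow> bool" where
  "graph V E \<longleftrightarrow> finite V \<and> V \<noteq> {} \<and>
     (\<forall>x y. E x y \<longrightarrow> x \<in> V \<and> y \<in> V) \<and>
     (\<forall>x y. E x y \<longrightarrow> E y x) \<and> (\<forall>x. \<not> E x x)"

definition has_induced :: "'a set \<Rightarrow> ('a \<Rightarrow> 'a \<Rightarrow> bool) \<Rightarrow> 'b set \<Rightarrow> ('b \<Rightarrow> 'b \<Rightarrow> bool) \<Rightarrow> bool" where
  "has_induced V E VH EH \<longleftrightarrow>
     (\<exists>f. inj_on f VH \<and> f ` VH \<subseteq> V \<and> (\<forall>x\<in>VH. \<forall>y\<in>VH. E (f x) (f y) \<longleftrightarrow> EH x y))"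

definition cycV :: "nat \<Rightarrow> nat set" where "cycV k = {0..<k}"
definition cycE :: "nat \<Rightarrow> nat \<Rightarrow> nat \<Rightarrow> bool" where
  "cycE k x y \<longleftrightarrow> x < k \<and> y < k \<and> (y = (x + 1) mod k \<or> x = (y + 1) mod k) \<and> x \<noteq> y"

definition twoP3V :: "nat set" where "twoP3V = {0..<6}"
definition twoP3E :: "nat \<Rightarrow> nat \<Rightarrow> bool" where
  "twoP3E x y \<longleftrightarrow> {x, y} \<in> {{0,1},{1,2},{3,4},{4,5}}"

text \<open>T_0 with p=0, q=1, u0=2, u1=3, u2=4, u3=5, w1=6, w2=7, w3=8.\<close>
definition T0V :: "nat set" where "T0V = {0..<9}"
definition T0E :: "nat \<Rightarrow> nat \<Rightarrow> bool" where
  "T0E x y \<longleftrightarrow> {x, y} \<in> {{0,1},{0,2},{0,4},{0,5},{1,3},{1,4},{1,5},{2,6},{3,6},{4,7},{5,8},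
                         {6,7},{6,8},{7,8}}"

text \<open>t-pentagon: a = (0,0), b_i = (1,i), c_i = (2,i), for 1 \<le> i \<le> t.\<close>
definition pentV :: "nat \<Rightarrow> (nat \<times> nat) set" where
  "pentV t = {(0,0)} \<union> {(1,i) | i. 1 \<le> i \<and> i \<le> t} \<union> {(2,i) | i. 1 \<le> i \<and> i \<le> t}"
definition pentE :: "nat \<Rightarrow> nat \<times> nat \<Rightarrow> nat \<times> nat \<Rightarrow> bool" where
  "pentE t x y \<longleftrightarrow> x \<in> pentV t \<and> y \<in> pentV t \<and>
     ((x = (0,0) \<and> fst y = 1) \<or> (y = (0,0) \<and> fst x = 1) \<or>
      (fst x = 2 \<and> fst y = 2 \<and> snd x \<noteq> snd y) \<or>
      ({fst x, fst y} = {1,2} \<and> snd x = snd y))"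

definition clique :: "('a \<Rightarrow> 'a \<Rightarrow> bool) \<Rightarrow> 'a set \<Rightarrow> bool" where
  "clique E S \<longleftrightarrow> (\<forall>x\<in>S. \<forall>y\<in>S. x \<noteq> y \<longrightarrow> E x y)"
definition complete_to :: "('a \<Rightarrow> 'a \<Rightarrow> bool) \<Rightarrow> 'a set \<Rightarrow> 'a set \<Rightarrow> bool" where
  "complete_to E X Y \<longleftrightarrow> (\<forall>x\<in>X. \<forall>y\<in>Y. E x y)"
definition anticomplete_to :: "('a \<Rightarrow> 'a \<Rightarrow> bool) \<Rightarrow> 'a set \<Rightarrow> 'a set \<Rightarrow> bool" where
  "anticomplete_to E X Y \<longleftrightarrow> (\<forall>x\<in>X. \<forall>y\<in>Y. \<not> E x y)"

definition nbhd :: "('a \<Rightarrow> 'a \<Rightarrow> bool) \<Rightarrow> 'a \<Rightarrow> 'a set" where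
  "nbhd E x = {y. E x y}"

definition is_partition :: "'a set \<Rightarrow> 'a set list \<Rightarrow> bool" where
  "is_partition W Ps \<longleftrightarrow> \<Union>(set Ps) = W \<and>
     (\<forall>i<length Ps. \<forall>j<length Ps. i \<noteq> j \<longrightarrow> Ps ! i \<inter> Ps ! j = {})"

definition villa_partition :: "'a set \<Rightarrow> ('a \<Rightarrow> 'a \<Rightarrow> bool) \<Rightarrow> nat \<Rightarrow> 'a set \<Rightarrow> (nat \<Rightarrow> 'a set) \<Rightarrow> (nat \<Rightarrow> 'a set) \<Rightarrow> bool" where
  "villa_partition W E t A B C \<longleftrightarrow>
     is_partition W ([A] @ map B [1..<t+1] @ map C [1..<t+1]) \<and>
     A \<noteq> {} \<and> clique E A \<and>
     (\<forall>i\<in>{1..t}. B i \<noteq> {} \<and> C i \<noteq> {} \<and> clique E (B i) \<and> clique E (C i)) \<and>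
     complete_to E A (\<Union>i\<in>{1..t}. B i) \<and> anticomplete_to E A (\<Union>i\<in>{1..t}. C i) \<and>
     (\<forall>i\<in>{1..t}. \<forall>j\<in>{1..t}. i \<noteq> j \<longrightarrow>
        anticomplete_to E (B i) (B j) \<and> complete_to E (C i) (C j) \<and> anticomplete_to E (B i) (C j)) \<and>
     (\<forall>i\<in>{1..t}. \<exists>bs. distinct bs \<and> set bs = B i \<and>
        nbhd E (hd bs) \<inter> C i = C i \<and> nbhd E (last bs) \<inter> C i \<noteq> {} \<and>
        (\<forall>k. Suc k < length bs \<longrightarrow> nbhd E (bs ! Suc k) \<inter> C i \<subseteq> nbhd E (bs ! k) \<inter> C i))"

definition villa :: "'a set \<Rightarrow> ('a \<Rightarrow> 'a \<Rightarrow> bool) \<Rightarrow> nat \<Rightarrow> bool" where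
  "villa V E t \<longleftrightarrow> graph V E \<and> (\<exists>A B C. villa_partition V E t A B C)"

text \<open>t-mansion. Adjacency among the villa part is that of the whole graph,
  which is the same as adjacency in the induced subgraph.\<close>
definition mansion :: "'a set \<Rightarrow> ('a \<Rightarrow> 'a \<Rightarrow> bool) \<Rightarrow> nat \<Rightarrow> bool" where
  "mansion V E t \<longleftrightarrow> graph V E \<and>
    (\<exists>A B C F X Y j.
       is_partition V ([A, F, X, Y] @ map B [1..<t+1] @ map C [1..<t+1]) \<and>
       F \<noteq> {} \<and> clique E F \<and> clique E X \<and> clique E Y \<and>
       villa_partition (A \<union> (\<Union>i\<in>{1..t}. B i) \<union> (\<Union>i\<in>{1..t}. C i)) E t A B C \<and>
       j \<in> {1..t} \<and>
       complete_to E F A \<and>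
       complete_to E F (\<Union>i\<in>{1..t} - {j}. B i) \<and>
       complete_to E F (\<Union>i\<in>{1..t} - {j}. C i) \<and>
       anticomplete_to E F (B j \<union> C j) \<and>
       complete_to E (B j) (C j) \<and>
       complete_to E X (A \<union> B j) \<and>
       anticomplete_to E X (\<Union>i\<in>{1..t} - {j}. B i) \<and>
       anticomplete_to E X (\<Union>i\<in>{1..t}. C i) \<and>
       complete_to E F (X \<union> Y) \<and>
       anticomplete_to E X Y \<and>
       complete_to E Y (\<Union>i\<in>{1..t}. C i) \<and>
       anticomplete_to E Y (A \<union> (\<Union>i\<in>{1..t}. B i)))"

definition connected_graph :: "'a set \<Rightarrow> ('a \<Rightarrow> 'a \<Rightarrow> bool) \<Rightarrow> bool" where
  "connected_graph V E \<longleftrightarrow> (\<forall>x\<in>V. \<forall>y\<in>V. (\<lambda>u v. u \<in> V \<and> v \<in> V \<and> E u v)\<^sup>*\<^sup>* x y)"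

definition complement :: "'a set \<Rightarrow> ('a \<Rightarrow> 'a \<Rightarrow> bool) \<Rightarrow> 'a \<Rightarrow> 'a \<Rightarrow> bool" where
  "complement V E x y \<longleftrightarrow> x \<in> V \<and> y \<in> V \<and> x \<noteq> y \<and> \<not> E x y"

definition anticonnected :: "'a set \<Rightarrow> ('a \<Rightarrow> 'a \<Rightarrow> bool) \<Rightarrow> bool" where
  "anticonnected V E \<longleftrightarrow> connected_graph V (complement V E)"

definition simplicial :: "'a set \<Rightarrow> ('a \<Rightarrow> 'a \<Rightarrow> bool) \<Rightarrow> 'a \<Rightarrow> bool" where
  "simplicial V E v \<longleftrightarrow> v \<in> V \<and> clique E (nbhd E v \<inter> V)"

definition universal :: "'a set \<Rightarrow> ('a \<Rightarrow> 'a \<Rightarrow> bool) \<Rightarrow> 'a \<Rightarrow> bool" where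
  "universal V E v \<longleftrightarrow> v \<in> V \<and> (\<forall>u\<in>V. u \<noteq> v \<longrightarrow> E v u)"

end

theory Submission
  imports Defs
begin

text \<open>
  Label every vertex of a mansion by its part (A, F, X, Y, B or C), by its index i if it lies in
  B_i or C_i, and by a rank: |N(b) \<inter> C_i| for b in B_i, and for c in C_i the least rank of a
  neighbour of c in B_i. The neighbourhoods in C_i of the vertices of B_i are nested, so b and c are
  adjacent iff rank c \<le> rank b. Hence adjacency of two distinct vertices is a fixed function of
  their labels, and an induced copy of a graph H in the mansion yields a labelling of H compatible
  with this label graph. For 2P_3, C_4, C_6, C_7, and for C_5 plus an isolated vertex (an induced
  subgraph of T_0), a finite case analysis on the parts shows that no such labelling exists.

  The t-pentagon is induced by a vertex of A, a vertex of each B_i complete to C_i and a vertex of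
  each C_i. In the complement every vertex reaches a fixed vertex of A in at most two steps, the
  middle one in C, so the mansion is anticonnected and has no universal vertex. Finally, every
  vertex is the centre of an induced P_3, so none is simplicial.
\<close>

definition realizes ::
    "('l \<Rightarrow> 'l \<Rightarrow> bool) \<Rightarrow> ('b \<Rightarrow> 'l) \<Rightarrow> 'b set \<Rightarrow> ('b \<Rightarrow> 'b \<Rightarrow> bool) \<Rightarrow> bool" where
  "realizes M L VH EH \<longleftrightarrow> (\<forall>x\<in>VH. \<forall>y\<in>VH. x \<noteq> y \<longrightarrow> (EH x y \<longleftrightarrow> M (L x) (L y)))"

lemma realizes_empty: "realizes M L {} EH"
  by (simp add: realizes_def)

lemma realizes_insert_symp:
  assumes "\<And>u v. M u v \<longleftrightarrow> M v u" and "\<And>x y. EH x y \<longleftrightarrow> EH y x"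
  shows "realizes M L (insert x VH) EH \<longleftrightarrow>
    (\<forall>y\<in>VH. x \<noteq> y \<longrightarrow> (EH x y \<longleftrightarrow> M (L x) (L y))) \<and> realizes M L VH EH"
  using assms by (auto simp: realizes_def)

lemma has_induced_realizes:
  assumes "\<And>u v. u \<in> V \<Longrightarrow> v \<in> V \<Longrightarrow> u \<noteq> v \<Longrightarrow> E u v \<longleftrightarrow> M (lab u) (lab v)"
    and "has_induced V E VH EH"
  shows "\<exists>L. realizes M L VH EH"
proof -
  obtain f where f: "inj_on f VH" "f ` VH \<subseteq> V" "\<forall>x\<in>VH. \<forall>y\<in>VH. E (f x) (f y) \<longleftrightarrow> EH x y"
    using assms(2) unfolding has_induced_def by blast
  have "realizes M (lab \<circ> f) VH EH"
    unfolding realizes_def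
  proof (intro ballI impI)
    fix x y assume xy: "x \<in> VH" "y \<in> VH" "x \<noteq> y"
    then have "f x \<noteq> f y" "f x \<in> V" "f y \<in> V" using f(1,2) by (auto dest: inj_onD)
    then show "EH x y \<longleftrightarrow> M ((lab \<circ> f) x) ((lab \<circ> f) y)" using f(3) assms(1) xy by auto
  qed
  then show ?thesis by blast
qed

lemma has_induced_trans:
  assumes "has_induced V E VH EH" and "has_induced VH EH VK EK"
  shows "has_induced V E VK EK"
proof -
  obtain f where f: "inj_on f VH" "f ` VH \<subseteq> V" "\<forall>x\<in>VH. \<forall>y\<in>VH. E (f x) (f y) \<longleftrightarrow> EH x y"
    using assms(1) unfolding has_induced_def by blast
  obtain g where g: "inj_on g VK" "g ` VK \<subseteq> VH" "\<forall>x\<in>VK. \<forall>y\<in>VK. EH (g x) (g y) \<longleftrightarrow> EK x y"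
    using assms(2) unfolding has_induced_def by blast
  have "inj_on (f \<circ> g) VK" using comp_inj_on[OF g(1) inj_on_subset[OF f(1) g(2)]] .
  moreover have "(f \<circ> g) ` VK \<subseteq> V" using f(2) g(2) by auto
  moreover have "\<forall>x\<in>VK. \<forall>y\<in>VK. E ((f \<circ> g) x) ((f \<circ> g) y) \<longleftrightarrow> EK x y"
    using f(3) g(2,3) by (simp add: image_subset_iff)
  ultimately show ?thesis unfolding has_induced_def by blast
qed

lemma connected_graph_if_hub:
  assumes sym: "\<And>u v. R u v \<Longrightarrow> R v u"
    and hub: "\<And>v. v \<in> V \<Longrightarrow> (\<lambda>u v. u \<in> V \<and> v \<in> V \<and> R u v)\<^sup>*\<^sup>* v h"
  shows "connected_graph V R"
proof -
  let ?R = "\<lambda>u v. u \<in> V \<and> v \<in> V \<and> R u v"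
  have "symp ?R\<^sup>*\<^sup>*" using sym by (intro symp_rtranclp sympI) blast
  then show ?thesis
    unfolding connected_graph_def using hub by (meson rtranclp_trans sympD)
qed

lemma not_universal_if_anticonnected:
  assumes "anticonnected V E" and "u \<in> V" and "v \<in> V" and "u \<noteq> v"
  shows "\<not> universal V E v"
proof -
  let ?R = "\<lambda>u v. u \<in> V \<and> v \<in> V \<and> complement V E u v"
  have "?R\<^sup>*\<^sup>* v u" using assms unfolding anticonnected_def connected_graph_def by blast
  then obtain w where "?R v w" using assms(4) by (auto elim: converse_rtranclpE)
  then show ?thesis unfolding universal_def complement_def by auto
qed

lemma not_simplicial_if_center_of_P3:
  assumes "graph V E" and "E v p" and "E v q" and "p \<noteq> q" and "\<not> E p q"
  shows "\<not> simplicial V E v"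
proof -
  have "p \<in> V" "q \<in> V" using assms(1-3) unfolding graph_def by auto
  then show ?thesis using assms(2-5) unfolding simplicial_def clique_def nbhd_def by auto
qed

section \<open>The label graph\<close>

datatype part = PartA | PartF | PartX | PartY | PartB | PartC

type_synonym label = "part \<times> nat \<times> nat"

fun label_adj :: "nat \<Rightarrow> label \<Rightarrow> label \<Rightarrow> bool" where
  "label_adj j (PartA, _) (q, _) \<longleftrightarrow> q \<in> {PartA, PartF, PartX, PartB}"
| "label_adj j (PartF, _) (q, i, _) \<longleftrightarrow> q \<in> {PartA, PartF, PartX, PartY} \<or> q \<in> {PartB, PartC} \<and> i \<noteq> j"
| "label_adj j (PartX, _) (q, i, _) \<longleftrightarrow> q \<in> {PartA, PartF, PartX} \<or> q = PartB \<and> i = j"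
| "label_adj j (PartY, _) (q, _) \<longleftrightarrow> q \<in> {PartF, PartY, PartC}"
| "label_adj j (PartB, i, r) (q, i', r') \<longleftrightarrow>
     q = PartA \<or> q = PartF \<and> i \<noteq> j \<or> q = PartX \<and> i = j \<or> q = PartB \<and> i = i' \<or>
     q = PartC \<and> i = i' \<and> (i = j \<or> r' \<le> r)"
| "label_adj j (PartC, i, r) (q, i', r') \<longleftrightarrow>
     q = PartF \<and> i \<noteq> j \<or> q = PartY \<or> q = PartB \<and> i = i' \<and> (i = j \<or> r \<le> r') \<or> q = PartC"

lemma label_exhaust:
  obtains i r where "l = (PartA, i, r)" | i r where "l = (PartF, i, r)" | i r where "l = (PartX, i, r)"
  | i r where "l = (PartY, i, r)" | i r where "l = (PartB, i, r)" | i r where "l = (PartC, i, r)"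
proof -
  obtain p i r where "l = (p, i, r)" by (cases l)
  then show thesis using that by (cases p) auto
qed

lemma label_adj_sym: "label_adj j u v \<longleftrightarrow> label_adj j v u"
  by (cases u rule: label_exhaust; cases v rule: label_exhaust) auto

lemma cycE_sym: "cycE k x y \<longleftrightarrow> cycE k y x"
  unfolding cycE_def by auto

lemma twoP3E_sym: "twoP3E x y \<longleftrightarrow> twoP3E y x"
  unfolding twoP3E_def by (metis insert_commute)

lemma label_graph_C4_free: "\<not> realizes (label_adj j) L (cycV 4) (cycE 4)"
proof -
  have vertices: "cycV 4 = {0, 1, 2, 3}"
    unfolding cycV_def by (auto simp: numeral_eq_Suc less_Suc_eq)
  show ?thesis
    unfolding vertices realizes_insert_symp[OF label_adj_sym cycE_sym] ball_simps insert_iff empty_iff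
    by (simp add: cycE_def realizes_empty)
      (cases "L 0" rule: label_exhaust; simp; cases "L 1" rule: label_exhaust; simp;
        cases "L 2" rule: label_exhaust; simp; cases "L 3" rule: label_exhaust; auto)
qed

lemma label_graph_2P3_free: "\<not> realizes (label_adj j) L twoP3V twoP3E"
proof -
  have vertices: "twoP3V = {0, 1, 2, 3, 4, 5}"
    unfolding twoP3V_def by (auto simp: numeral_eq_Suc less_Suc_eq)
  show ?thesis
    unfolding vertices realizes_insert_symp[OF label_adj_sym twoP3E_sym] ball_simps insert_iff empty_iff
    by (simp add: twoP3E_def doubleton_eq_iff realizes_empty)
      (cases "L 0" rule: label_exhaust; simp; cases "L 1" rule: label_exhaust; simp;
        cases "L 2" rule: label_exhaust; simp; cases "L 3" rule: label_exhaust; simp;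
        cases "L 4" rule: label_exhaust; simp; cases "L 5" rule: label_exhaust; auto)
qed

lemma label_graph_C6_free: "\<not> realizes (label_adj j) L (cycV 6) (cycE 6)"
proof -
  have vertices: "cycV 6 = {0, 1, 2, 3, 4, 5}"
    unfolding cycV_def by (auto simp: numeral_eq_Suc less_Suc_eq)
  show ?thesis
    unfolding vertices realizes_insert_symp[OF label_adj_sym cycE_sym] ball_simps insert_iff empty_iff
    by (simp add: cycE_def doubleton_eq_iff realizes_empty)
      (cases "L 0" rule: label_exhaust; simp; cases "L 1" rule: label_exhaust; simp;
        cases "L 2" rule: label_exhaust; simp; cases "L 3" rule: label_exhaust; simp;
        cases "L 4" rule: label_exhaust; simp; cases "L 5" rule: label_exhaust; auto)
qed

lemma label_graph_C7_free: "\<not> realizes (label_adj j) L (cycV 7) (cycE 7)"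
proof -
  have vertices: "cycV 7 = {0, 1, 2, 3, 4, 5, 6}"
    unfolding cycV_def by (auto simp: numeral_eq_Suc less_Suc_eq)
  show ?thesis
    unfolding vertices realizes_insert_symp[OF label_adj_sym cycE_sym] ball_simps insert_iff empty_iff
    by (simp add: cycE_def doubleton_eq_iff realizes_empty)
      (cases "L 0" rule: label_exhaust; simp; cases "L 1" rule: label_exhaust; simp;
        cases "L 2" rule: label_exhaust; simp; cases "L 3" rule: label_exhaust; simp;
        cases "L 4" rule: label_exhaust; simp; cases "L 5" rule: label_exhaust; simp;
        cases "L 6" rule: label_exhaust; auto)
qed

text \<open>The graph with vertices \<open>cycV 6\<close> and edges \<open>cycE 5\<close> is C_5 plus the isolated vertex 5.\<close>

lemma label_graph_C5_K1_free: "\<not> realizes (label_adj j) L (cycV 6) (cycE 5)"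
proof -
  have vertices: "cycV 6 = {0, 1, 2, 3, 4, 5}"
    unfolding cycV_def by (auto simp: numeral_eq_Suc less_Suc_eq)
  show ?thesis
    unfolding vertices realizes_insert_symp[OF label_adj_sym cycE_sym] ball_simps insert_iff empty_iff
    by (simp add: cycE_def doubleton_eq_iff realizes_empty)
      (cases "L 0" rule: label_exhaust; simp; cases "L 1" rule: label_exhaust; simp;
        cases "L 2" rule: label_exhaust; simp; cases "L 3" rule: label_exhaust; simp;
        cases "L 4" rule: label_exhaust; simp; cases "L 5" rule: label_exhaust; auto)
qed

text \<open>The vertices p, u2, w2, w3, u3 of T_0 span a C_5, and u1 has no neighbour among them.\<close>

lemma T0_has_induced_C5_K1: "has_induced T0V T0E (cycV 6) (cycE 5)"
proof -
  let ?f = "(!) [0, 4, 7, 8, 5, 3 :: nat]"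
  have vertices: "cycV 6 = {0, 1, 2, 3, 4, 5}"
    unfolding cycV_def by (auto simp: numeral_eq_Suc less_Suc_eq)
  have "inj_on ?f (cycV 6)" "?f ` cycV 6 \<subseteq> T0V"
    "\<forall>x\<in>cycV 6. \<forall>y\<in>cycV 6. T0E (?f x) (?f y) \<longleftrightarrow> cycE 5 x y"
    unfolding vertices by (simp_all add: T0V_def T0E_def cycE_def doubleton_eq_iff)
  then show ?thesis unfolding has_induced_def by blast
qed

section \<open>Nested neighbourhoods\<close>

lemma nested_nth_if_nested_Suc:
  assumes "\<forall>k. Suc k < length xs \<longrightarrow> N (xs ! Suc k) \<subseteq> N (xs ! k)" and "k \<le> m" and "m < length xs"
  shows "N (xs ! m) \<subseteq> N (xs ! k)"
proof -
  have sorted: "sorted_wrt (\<lambda>x y. N y \<subseteq> N x) xs"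
    using assms(1) by (subst sorted_wrt_iff_nth_Suc_transp) (auto intro: transpI)
  show ?thesis
  proof (cases "k = m")
    case False
    then show ?thesis using sorted_wrt_nth_less[OF sorted, of k m] assms(2,3) by simp
  qed simp
qed

lemma nested_set_if_nested_Suc:
  assumes "\<forall>k. Suc k < length xs \<longrightarrow> N (xs ! Suc k) \<subseteq> N (xs ! k)" and "x \<in> set xs" and "y \<in> set xs"
  shows "N x \<subseteq> N y \<or> N y \<subseteq> N x"
proof -
  obtain k m where "k < length xs" "xs ! k = x" "m < length xs" "xs ! m = y"
    using assms(2,3) by (auto simp: in_set_conv_nth)
  then show ?thesis
    using nested_nth_if_nested_Suc[OF assms(1)] by (metis nat_le_linear)
qed

lemma nested_last_if_nested_Suc:
  assumes "\<forall>k. Suc k < length xs \<longrightarrow> N (xs ! Suc k) \<subseteq> N (xs ! k)" and "x \<in> set xs"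
  shows "N (last xs) \<subseteq> N x"
proof -
  obtain k where k: "k < length xs" "xs ! k = x"
    using assms(2) by (auto simp: in_set_conv_nth)
  then have "last xs = xs ! (length xs - 1)"
    using k(1) by (intro last_conv_nth) auto
  then show ?thesis
    using nested_nth_if_nested_Suc[OF assms(1), of k "length xs - 1"] k by simp
qed

lemma mem_nested_iff_Min_card_le:
  assumes nested: "\<And>b b'. b \<in> S \<Longrightarrow> b' \<in> S \<Longrightarrow> N b \<subseteq> N b' \<or> N b' \<subseteq> N b"
    and finite: "finite S" "\<And>b. b \<in> S \<Longrightarrow> finite (N b)"
    and "b \<in> S" and "b\<^sub>0 \<in> S" and "c \<in> N b\<^sub>0"
  shows "c \<in> N b \<longleftrightarrow> Min ((\<lambda>b'. card (N b')) ` {b' \<in> S. c \<in> N b'}) \<le> card (N b)"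
    (is "_ \<longleftrightarrow> Min ?ranks \<le> _")
proof
  assume "c \<in> N b"
  then show "Min ?ranks \<le> card (N b)"
    using finite(1) \<open>b \<in> S\<close> by (intro Min_le) auto
next
  assume le: "Min ?ranks \<le> card (N b)"
  have "Min ?ranks \<in> ?ranks"
    using finite(1) assms(5,6) by (intro Min_in) auto
  then obtain b' where b': "b' \<in> S" "c \<in> N b'" "card (N b') \<le> card (N b)"
    using le by auto
  have "N b' \<subseteq> N b"
  proof (cases "N b' \<subseteq> N b")
    case False
    then have "N b \<subseteq> N b'" using nested \<open>b \<in> S\<close> b'(1) by blast
    then show ?thesis using card_seteq finite(2) b' by metis
  qed
  then show "c \<in> N b" using b'(2) by blast
qed

section \<open>Mansions\<close>

locale mansion_partition =
  fixes V :: "'a set" and E :: "'a \<Rightarrow> 'a \<Rightarrow> bool" and t :: nat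
    and A :: "'a set" and B C :: "nat \<Rightarrow> 'a set" and F X Y :: "'a set" and j :: nat
  assumes graph: "graph V E"
    and partition: "is_partition V ([A, F, X, Y] @ map B [1..<t+1] @ map C [1..<t+1])"
    and F_nonempty: "F \<noteq> {}"
    and F_clique: "clique E F" and X_clique: "clique E X" and Y_clique: "clique E Y"
    and villa: "villa_partition (A \<union> (\<Union>i\<in>{1..t}. B i) \<union> (\<Union>i\<in>{1..t}. C i)) E t A B C"
    and j: "j \<in> {1..t}"
    and F_A: "complete_to E F A"
    and F_B: "complete_to E F (\<Union>i\<in>{1..t} - {j}. B i)"
    and F_C: "complete_to E F (\<Union>i\<in>{1..t} - {j}. C i)"
    and F_Bj_Cj: "anticomplete_to E F (B j \<union> C j)"
    and Bj_Cj: "complete_to E (B j) (C j)"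
    and X_A_Bj: "complete_to E X (A \<union> B j)"
    and X_B: "anticomplete_to E X (\<Union>i\<in>{1..t} - {j}. B i)"
    and X_C: "anticomplete_to E X (\<Union>i\<in>{1..t}. C i)"
    and F_X_Y: "complete_to E F (X \<union> Y)"
    and X_Y: "anticomplete_to E X Y"
    and Y_C: "complete_to E Y (\<Union>i\<in>{1..t}. C i)"
    and Y_A_B: "anticomplete_to E Y (A \<union> (\<Union>i\<in>{1..t}. B i))"

lemma mansion_partition_if_mansion:
  assumes "mansion V E t"
  obtains A B C F X Y j where "mansion_partition V E t A B C F X Y j"
  using assms unfolding mansion_def mansion_partition_def by blast

context mansion_partition
begin

lemma E_sym: "E u v \<Longrightarrow> E v u"
  using graph unfolding graph_def by blast

lemma E_irrefl: "\<not> E v v"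
  using graph unfolding graph_def by blast

lemma E_commute: "E u v \<longleftrightarrow> E v u"
  using E_sym by blast

lemma finite_V: "finite V"
  using graph unfolding graph_def by blast

lemma V_eq: "V = A \<union> F \<union> X \<union> Y \<union> (\<Union>i\<in>{1..t}. B i) \<union> (\<Union>i\<in>{1..t}. C i)"
proof -
  have "set [1..<t+1] = {1..t}" by auto
  then show ?thesis using partition unfolding is_partition_def by auto
qed

lemma vertex_cases:
  assumes "v \<in> V"
  obtains "v \<in> A" | "v \<in> F" | "v \<in> X" | "v \<in> Y"
  | i where "i \<in> {1..t}" "v \<in> B i" | i where "i \<in> {1..t}" "v \<in> C i"
  using assms V_eq by blast

lemma part_exclusive:
  "v \<in> A \<Longrightarrow> v \<notin> F \<and> v \<notin> X \<and> v \<notin> Y"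
  "v \<in> F \<Longrightarrow> v \<notin> X \<and> v \<notin> Y"
  "v \<in> X \<Longrightarrow> v \<notin> Y"
  "i \<in> {1..t} \<Longrightarrow> v \<in> B i \<Longrightarrow> v \<notin> A \<and> v \<notin> F \<and> v \<notin> X \<and> v \<notin> Y"
  "i \<in> {1..t} \<Longrightarrow> v \<in> C i \<Longrightarrow> v \<notin> A \<and> v \<notin> F \<and> v \<notin> X \<and> v \<notin> Y"
  "i \<in> {1..t} \<Longrightarrow> k \<in> {1..t} \<Longrightarrow> v \<in> B i \<Longrightarrow> v \<notin> C k"
  "i \<in> {1..t} \<Longrightarrow> k \<in> {1..t} \<Longrightarrow> v \<in> B i \<Longrightarrow> v \<in> B k \<Longrightarrow> i = k"
  "i \<in> {1..t} \<Longrightarrow> k \<in> {1..t} \<Longrightarrow> v \<in> C i \<Longrightarrow> v \<in> C k \<Longrightarrow> i = k"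
proof -
  define Ps where "Ps = [A, F, X, Y] @ map B [1..<t+1] @ map C [1..<t+1]"
  have nth_parts: "Ps ! 0 = A" "Ps ! 1 = F" "Ps ! 2 = X" "Ps ! 3 = Y"
    "i \<in> {1..t} \<Longrightarrow> Ps ! (3 + i) = B i" "i \<in> {1..t} \<Longrightarrow> Ps ! (3 + t + i) = C i" for i
    unfolding Ps_def by (auto simp: nth_append simp del: upt_Suc)
  have "Ps ! m \<inter> Ps ! n = {}" if "m < 4 + 2 * t" "n < 4 + 2 * t" "m \<noteq> n" for m n
    using partition that unfolding is_partition_def Ps_def by auto
  then have disjoint: "v \<notin> Ps ! n" if "v \<in> Ps ! m" "m < 4 + 2 * t" "n < 4 + 2 * t" "m \<noteq> n" for v m n
    using that by blast
  show "v \<in> A \<Longrightarrow> v \<notin> F \<and> v \<notin> X \<and> v \<notin> Y" "v \<in> F \<Longrightarrow> v \<notin> X \<and> v \<notin> Y"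
    "v \<in> X \<Longrightarrow> v \<notin> Y"
    using nth_parts(1-4) disjoint[of v 0 1] disjoint[of v 0 2] disjoint[of v 0 3] disjoint[of v 1 2]
      disjoint[of v 1 3] disjoint[of v 2 3] by simp_all
  show "i \<in> {1..t} \<Longrightarrow> v \<in> B i \<Longrightarrow> v \<notin> A \<and> v \<notin> F \<and> v \<notin> X \<and> v \<notin> Y"
    using nth_parts disjoint[of v "3 + i" 0] disjoint[of v "3 + i" 1] disjoint[of v "3 + i" 2]
      disjoint[of v "3 + i" 3] by auto
  show "i \<in> {1..t} \<Longrightarrow> v \<in> C i \<Longrightarrow> v \<notin> A \<and> v \<notin> F \<and> v \<notin> X \<and> v \<notin> Y"
    using nth_parts disjoint[of v "3 + t + i" 0] disjoint[of v "3 + t + i" 1] disjoint[of v "3 + t + i" 2]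
      disjoint[of v "3 + t + i" 3] by auto
  show "i \<in> {1..t} \<Longrightarrow> k \<in> {1..t} \<Longrightarrow> v \<in> B i \<Longrightarrow> v \<notin> C k"
    using disjoint[of v "3 + i" "3 + t + k"] by (auto simp: nth_parts)
  show "i \<in> {1..t} \<Longrightarrow> k \<in> {1..t} \<Longrightarrow> v \<in> B i \<Longrightarrow> v \<in> B k \<Longrightarrow> i = k"
    using disjoint[of v "3 + i" "3 + k"] by (cases "i = k") (auto simp: nth_parts)
  show "i \<in> {1..t} \<Longrightarrow> k \<in> {1..t} \<Longrightarrow> v \<in> C i \<Longrightarrow> v \<in> C k \<Longrightarrow> i = k"
    using disjoint[of v "3 + t + i" "3 + t + k"] by (cases "i = k") (auto simp: nth_parts)
qed

lemma villa_parts: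
  "A \<noteq> {}" "clique E A"
  "i \<in> {1..t} \<Longrightarrow> B i \<noteq> {}" "i \<in> {1..t} \<Longrightarrow> C i \<noteq> {}"
  "i \<in> {1..t} \<Longrightarrow> clique E (B i)" "i \<in> {1..t} \<Longrightarrow> clique E (C i)"
  "complete_to E A (\<Union>i\<in>{1..t}. B i)" "anticomplete_to E A (\<Union>i\<in>{1..t}. C i)"
  "i \<in> {1..t} \<Longrightarrow> k \<in> {1..t} \<Longrightarrow> i \<noteq> k \<Longrightarrow> anticomplete_to E (B i) (B k)"
  "i \<in> {1..t} \<Longrightarrow> k \<in> {1..t} \<Longrightarrow> i \<noteq> k \<Longrightarrow> complete_to E (C i) (C k)"
  "i \<in> {1..t} \<Longrightarrow> k \<in> {1..t} \<Longrightarrow> i \<noteq> k \<Longrightarrow> anticomplete_to E (B i) (C k)"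
  using villa unfolding villa_partition_def by blast+

lemma villa_order:
  assumes "i \<in> {1..t}"
  obtains bs where "set bs = B i" "nbhd E (hd bs) \<inter> C i = C i" "nbhd E (last bs) \<inter> C i \<noteq> {}"
    "\<forall>k. Suc k < length bs \<longrightarrow> nbhd E (bs ! Suc k) \<inter> C i \<subseteq> nbhd E (bs ! k) \<inter> C i"
proof -
  have "\<forall>i\<in>{1..t}. \<exists>bs. distinct bs \<and> set bs = B i \<and>
      nbhd E (hd bs) \<inter> C i = C i \<and> nbhd E (last bs) \<inter> C i \<noteq> {} \<and>
      (\<forall>k. Suc k < length bs \<longrightarrow> nbhd E (bs ! Suc k) \<inter> C i \<subseteq> nbhd E (bs ! k) \<inter> C i)"
    using villa unfolding villa_partition_def by (elim conjE)
  then show thesis using that assms by blast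
qed

lemma B_C_nested:
  assumes "i \<in> {1..t}" and "b \<in> B i" and "b' \<in> B i"
  shows "nbhd E b \<inter> C i \<subseteq> nbhd E b' \<inter> C i \<or> nbhd E b' \<inter> C i \<subseteq> nbhd E b \<inter> C i"
proof -
  obtain bs where "set bs = B i"
    "\<forall>k. Suc k < length bs \<longrightarrow> nbhd E (bs ! Suc k) \<inter> C i \<subseteq> nbhd E (bs ! k) \<inter> C i"
    using villa_order[OF assms(1)] by metis
  then show ?thesis
    using nested_set_if_nested_Suc[where N = "\<lambda>b. nbhd E b \<inter> C i"] assms(2,3) by blast
qed

lemma B_dominating:
  assumes "i \<in> {1..t}"
  obtains b where "b \<in> B i" "C i \<subseteq> nbhd E b"
proof -
  obtain bs where "set bs = B i" "C i \<subseteq> nbhd E (hd bs)"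
    using villa_order[OF assms] by (metis inf.absorb_iff2)
  moreover have "bs \<noteq> []" using \<open>set bs = B i\<close> villa_parts(3)[OF assms] by auto
  ultimately show thesis using that hd_in_set by blast
qed

lemma B_has_C_neighbour:
  assumes "i \<in> {1..t}" and "b \<in> B i"
  obtains c where "c \<in> C i" "E b c"
proof -
  obtain bs where "set bs = B i" "nbhd E (last bs) \<inter> C i \<noteq> {}"
    "\<forall>k. Suc k < length bs \<longrightarrow> nbhd E (bs ! Suc k) \<inter> C i \<subseteq> nbhd E (bs ! k) \<inter> C i"
    using villa_order[OF assms(1)] by metis
  then have "nbhd E b \<inter> C i \<noteq> {}"
    using nested_last_if_nested_Suc[where N = "\<lambda>b. nbhd E b \<inter> C i"] assms(2) by blast
  then show thesis using that unfolding nbhd_def by blast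
qed

definition threshold :: "nat \<Rightarrow> 'a \<Rightarrow> nat" where
  "threshold i c = Min ((\<lambda>b. card (nbhd E b \<inter> C i)) ` {b \<in> B i. c \<in> nbhd E b \<inter> C i})"

lemma B_C_adjacent_iff_threshold:
  assumes "i \<in> {1..t}" and "b \<in> B i" and "c \<in> C i"
  shows "E b c \<longleftrightarrow> threshold i c \<le> card (nbhd E b \<inter> C i)"
proof -
  have finite: "finite (B i)" "finite (nbhd E b' \<inter> C i)" for b'
    using finite_V V_eq assms(1) by (auto intro: finite_subset)
  obtain b\<^sub>0 where "b\<^sub>0 \<in> B i" "C i \<subseteq> nbhd E b\<^sub>0"
    using B_dominating[OF assms(1)] .
  then have "c \<in> nbhd E b\<^sub>0 \<inter> C i" using assms(3) by blast
  with mem_nested_iff_Min_card_le[where N = "\<lambda>b. nbhd E b \<inter> C i", OF B_C_nested[OF assms(1)]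
      finite \<open>b \<in> B i\<close> \<open>b\<^sub>0 \<in> B i\<close>]
  show ?thesis using assms(3) unfolding threshold_def nbhd_def by simp
qed

definition label_of :: "'a \<Rightarrow> label" where
  "label_of v =
    (if v \<in> A then (PartA, 0, 0) else if v \<in> F then (PartF, 0, 0)
     else if v \<in> X then (PartX, 0, 0) else if v \<in> Y then (PartY, 0, 0)
     else let i = (THE i. i \<in> {1..t} \<and> v \<in> B i \<union> C i) in
       if v \<in> B i then (PartB, i, card (nbhd E v \<inter> C i)) else (PartC, i, threshold i v))"

lemma label_of_A: "v \<in> A \<Longrightarrow> label_of v = (PartA, 0, 0)"
  and label_of_F: "v \<in> F \<Longrightarrow> label_of v = (PartF, 0, 0)"
  and label_of_X: "v \<in> X \<Longrightarrow> label_of v = (PartX, 0, 0)"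
  and label_of_Y: "v \<in> Y \<Longrightarrow> label_of v = (PartY, 0, 0)"
  using part_exclusive(1-3) by (auto simp: label_of_def)

lemma index_unique:
  assumes "i \<in> {1..t}" and "v \<in> B i \<union> C i"
  shows "(THE k. k \<in> {1..t} \<and> v \<in> B k \<union> C k) = i"
proof (rule the_equality)
  fix k assume "k \<in> {1..t} \<and> v \<in> B k \<union> C k"
  then show "k = i" using assms part_exclusive(6-8) by blast
qed (use assms in blast)

lemma label_of_B:
  assumes "i \<in> {1..t}" and "v \<in> B i"
  shows "label_of v = (PartB, i, card (nbhd E v \<inter> C i))"
  using assms part_exclusive(4) index_unique[of i v] unfolding label_of_def Let_def by auto

lemma label_of_C:
  assumes "i \<in> {1..t}" and "v \<in> C i"
  shows "label_of v = (PartC, i, threshold i v)"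
  using assms part_exclusive(5) part_exclusive(6)[OF assms(1,1)] index_unique[of i v]
  unfolding label_of_def Let_def by auto

lemmas label_of_simps = label_of_A label_of_F label_of_X label_of_Y label_of_B label_of_C

lemma adjacent_parts:
  "a \<in> A \<Longrightarrow> a' \<in> A \<Longrightarrow> a \<noteq> a' \<Longrightarrow> E a a'"
  "f \<in> F \<Longrightarrow> f' \<in> F \<Longrightarrow> f \<noteq> f' \<Longrightarrow> E f f'"
  "x \<in> X \<Longrightarrow> x' \<in> X \<Longrightarrow> x \<noteq> x' \<Longrightarrow> E x x'"
  "y \<in> Y \<Longrightarrow> y' \<in> Y \<Longrightarrow> y \<noteq> y' \<Longrightarrow> E y y'"
  "i \<in> {1..t} \<Longrightarrow> k \<in> {1..t} \<Longrightarrow> c \<in> C i \<Longrightarrow> c' \<in> C k \<Longrightarrow> c \<noteq> c' \<Longrightarrow> E c c'"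
  "a \<in> A \<Longrightarrow> i \<in> {1..t} \<Longrightarrow> b \<in> B i \<Longrightarrow> E a b \<and> E b a"
  "f \<in> F \<Longrightarrow> a \<in> A \<Longrightarrow> E f a \<and> E a f"
  "f \<in> F \<Longrightarrow> x \<in> X \<Longrightarrow> E f x \<and> E x f"
  "f \<in> F \<Longrightarrow> y \<in> Y \<Longrightarrow> E f y \<and> E y f"
  "x \<in> X \<Longrightarrow> a \<in> A \<Longrightarrow> E x a \<and> E a x"
  "y \<in> Y \<Longrightarrow> i \<in> {1..t} \<Longrightarrow> c \<in> C i \<Longrightarrow> E y c \<and> E c y"
  subgoal using villa_parts(2) unfolding clique_def by blast
  subgoal using F_clique unfolding clique_def by blast
  subgoal using X_clique unfolding clique_def by blast
  subgoal using Y_clique unfolding clique_def by blast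
  subgoal using villa_parts(6,10) unfolding clique_def complete_to_def by metis
  subgoal using villa_parts(7) E_sym unfolding complete_to_def by blast
  subgoal using F_A E_sym unfolding complete_to_def by blast
  subgoal using F_X_Y E_sym unfolding complete_to_def by blast
  subgoal using F_X_Y E_sym unfolding complete_to_def by blast
  subgoal using X_A_Bj E_sym unfolding complete_to_def by blast
  subgoal using Y_C E_sym unfolding complete_to_def by blast
  done

lemma nonadjacent_parts:
  "a \<in> A \<Longrightarrow> i \<in> {1..t} \<Longrightarrow> c \<in> C i \<Longrightarrow> \<not> E a c \<and> \<not> E c a"
  "x \<in> X \<Longrightarrow> i \<in> {1..t} \<Longrightarrow> c \<in> C i \<Longrightarrow> \<not> E x c \<and> \<not> E c x"
  "x \<in> X \<Longrightarrow> y \<in> Y \<Longrightarrow> \<not> E x y \<and> \<not> E y x"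
  "y \<in> Y \<Longrightarrow> a \<in> A \<Longrightarrow> \<not> E y a \<and> \<not> E a y"
  "y \<in> Y \<Longrightarrow> i \<in> {1..t} \<Longrightarrow> b \<in> B i \<Longrightarrow> \<not> E y b \<and> \<not> E b y"
  subgoal using villa_parts(8) E_sym unfolding anticomplete_to_def by blast
  subgoal using X_C E_sym unfolding anticomplete_to_def by blast
  subgoal using X_Y E_sym unfolding anticomplete_to_def by blast
  subgoal using Y_A_B E_sym unfolding anticomplete_to_def by blast
  subgoal using Y_A_B E_sym unfolding anticomplete_to_def by blast
  done

lemma adjacency_by_index:
  assumes "i \<in> {1..t}"
  shows "f \<in> F \<Longrightarrow> b \<in> B i \<Longrightarrow> (E f b \<longleftrightarrow> i \<noteq> j) \<and> (E b f \<longleftrightarrow> i \<noteq> j)"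
    and "f \<in> F \<Longrightarrow> c \<in> C i \<Longrightarrow> (E f c \<longleftrightarrow> i \<noteq> j) \<and> (E c f \<longleftrightarrow> i \<noteq> j)"
    and "x \<in> X \<Longrightarrow> b \<in> B i \<Longrightarrow> (E x b \<longleftrightarrow> i = j) \<and> (E b x \<longleftrightarrow> i = j)"
    and "k \<in> {1..t} \<Longrightarrow> b \<in> B i \<Longrightarrow> b' \<in> B k \<Longrightarrow> b \<noteq> b' \<Longrightarrow> E b b' \<longleftrightarrow> i = k"
proof -
  have F_B_iff: "E f b \<longleftrightarrow> i \<noteq> j" if "f \<in> F" "b \<in> B i" for f b
    using that assms F_B F_Bj_Cj unfolding complete_to_def anticomplete_to_def by (cases "i = j") auto
  have F_C_iff: "E f c \<longleftrightarrow> i \<noteq> j" if "f \<in> F" "c \<in> C i" for f c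
    using that assms F_C F_Bj_Cj unfolding complete_to_def anticomplete_to_def by (cases "i = j") auto
  have X_B_iff: "E x b \<longleftrightarrow> i = j" if "x \<in> X" "b \<in> B i" for x b
    using that assms X_A_Bj X_B unfolding complete_to_def anticomplete_to_def by (cases "i = j") auto
  show "f \<in> F \<Longrightarrow> b \<in> B i \<Longrightarrow> (E f b \<longleftrightarrow> i \<noteq> j) \<and> (E b f \<longleftrightarrow> i \<noteq> j)"
    and "f \<in> F \<Longrightarrow> c \<in> C i \<Longrightarrow> (E f c \<longleftrightarrow> i \<noteq> j) \<and> (E c f \<longleftrightarrow> i \<noteq> j)"
    and "x \<in> X \<Longrightarrow> b \<in> B i \<Longrightarrow> (E x b \<longleftrightarrow> i = j) \<and> (E b x \<longleftrightarrow> i = j)"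
    using F_B_iff F_C_iff X_B_iff E_commute by blast+
  show "k \<in> {1..t} \<Longrightarrow> b \<in> B i \<Longrightarrow> b' \<in> B k \<Longrightarrow> b \<noteq> b' \<Longrightarrow> E b b' \<longleftrightarrow> i = k"
    using assms villa_parts(5,9) unfolding clique_def anticomplete_to_def by (cases "i = k") auto
qed

lemma B_C_adjacent_iff:
  assumes "i \<in> {1..t}" and "k \<in> {1..t}" and "b \<in> B i" and "c \<in> C k"
  shows "(E b c \<longleftrightarrow> i = k \<and> (i = j \<or> threshold k c \<le> card (nbhd E b \<inter> C k)))
    \<and> (E c b \<longleftrightarrow> i = k \<and> (i = j \<or> threshold k c \<le> card (nbhd E b \<inter> C k)))"
proof -
  have "E b c \<longleftrightarrow> i = k \<and> (i = j \<or> threshold k c \<le> card (nbhd E b \<inter> C k))"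
  proof (cases "i = k")
    case True
    then show ?thesis
      using assms Bj_Cj B_C_adjacent_iff_threshold unfolding complete_to_def by auto
  next
    case False
    then show ?thesis using assms villa_parts(11) unfolding anticomplete_to_def by auto
  qed
  then show ?thesis using E_commute by blast
qed

lemma adjacent_iff_label_adj:
  assumes "u \<in> V" and "v \<in> V" and "u \<noteq> v"
  shows "E u v \<longleftrightarrow> label_adj j (label_of u) (label_of v)"
  using assms
  by (elim vertex_cases) (auto simp: label_of_simps adjacent_parts nonadjacent_parts adjacency_by_index B_C_adjacent_iff)

lemma not_has_induced_if_label_graph_free:
  assumes "\<And>L. \<not> realizes (label_adj j) L VH EH"
  shows "\<not> has_induced V E VH EH"
  using has_induced_realizes[where M = "label_adj j" and lab = label_of, OF adjacent_iff_label_adj] assms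
  by blast

lemma other_index:
  assumes "2 \<le> t" and "i \<in> {1..t}"
  obtains k where "k \<in> {1..t}" and "k \<noteq> i"
  using assms by (cases "i = 1") (auto intro: that[of 1] that[of 2])

lemma pentagon_representatives:
  obtains a b c where "a \<in> A" and "\<forall>i\<in>{1..t}. b i \<in> B i \<and> C i \<subseteq> nbhd E (b i)"
    and "\<forall>i\<in>{1..t}. c i \<in> C i"
proof -
  have "\<forall>i\<in>{1..t}. \<exists>b. b \<in> B i \<and> C i \<subseteq> nbhd E b"
    using B_dominating by (metis (no_types))
  moreover have "\<forall>i\<in>{1..t}. \<exists>c. c \<in> C i"
    using villa_parts(4) by blast
  ultimately obtain b c where "\<forall>i\<in>{1..t}. b i \<in> B i \<and> C i \<subseteq> nbhd E (b i)" "\<forall>i\<in>{1..t}. c i \<in> C i"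
    by (metis bchoice)
  moreover obtain a where "a \<in> A" using villa_parts(1) by blast
  ultimately show thesis using that by blast
qed

lemma pentagon_adjacency:
  assumes a: "a \<in> A" and b: "\<forall>i\<in>{1..t}. b i \<in> B i \<and> C i \<subseteq> nbhd E (b i)"
    and c: "\<forall>i\<in>{1..t}. c i \<in> C i"
  shows "i \<in> {1..t} \<Longrightarrow> E a (b i) \<and> E (b i) a"
    and "i \<in> {1..t} \<Longrightarrow> \<not> E a (c i) \<and> \<not> E (c i) a"
    and "i \<in> {1..t} \<Longrightarrow> k \<in> {1..t} \<Longrightarrow> \<not> E (b i) (b k)"
    and "i \<in> {1..t} \<Longrightarrow> k \<in> {1..t} \<Longrightarrow>
      (E (b i) (c k) \<longleftrightarrow> i = k) \<and> (E (c k) (b i) \<longleftrightarrow> i = k)"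
    and "i \<in> {1..t} \<Longrightarrow> k \<in> {1..t} \<Longrightarrow> E (c i) (c k) \<longleftrightarrow> i \<noteq> k"
proof -
  show "E a (b i) \<and> E (b i) a" "\<not> E a (c i) \<and> \<not> E (c i) a" if i: "i \<in> {1..t}"
    using adjacent_parts(6)[OF a i] nonadjacent_parts(1)[OF a i] b i c by blast+
  fix i k assume i: "i \<in> {1..t}" and k: "k \<in> {1..t}"
  have in_parts: "b i \<in> B i" "b k \<in> B k" "c i \<in> C i" "c k \<in> C k" using b c i k by blast+
  show "(E (b i) (c k) \<longleftrightarrow> i = k) \<and> (E (c k) (b i) \<longleftrightarrow> i = k)"
    using b i B_C_adjacent_iff[OF i k in_parts(1,4)] in_parts(4) unfolding nbhd_def by auto
  have "b i \<noteq> b k" and "c i \<noteq> c k" if "i \<noteq> k"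
    using that in_parts part_exclusive(7,8)[OF i k] by auto
  then show "\<not> E (b i) (b k)" "E (c i) (c k) \<longleftrightarrow> i \<noteq> k"
    using adjacency_by_index(4)[OF i k in_parts(1,2)] adjacent_parts(5)[OF i k in_parts(3,4)] E_irrefl
    by (cases "i = k"; simp)+
qed

lemma has_induced_pentagon: "has_induced V E (pentV t) (pentE t)"
proof -
  obtain a b c where a: "a \<in> A" and b: "\<forall>i\<in>{1..t}. b i \<in> B i \<and> C i \<subseteq> nbhd E (b i)"
    and c: "\<forall>i\<in>{1..t}. c i \<in> C i"
    by (rule pentagon_representatives)
  define g where "g p = (if fst p = 0 then a else if fst p = 1 then b (snd p) else c (snd p))"
    for p :: "nat \<times> nat"
  have pentV: "x \<in> pentV t \<longleftrightarrow> x = (0, 0) \<or> (\<exists>i\<in>{1..t}. x = (1, i) \<or> x = (2, i))" for x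
    unfolding pentV_def by auto
  have pentV_cases: "P" if "x \<in> pentV t" and "x = (0, 0) \<Longrightarrow> P"
    and "\<And>i. i \<in> {1..t} \<Longrightarrow> x = (1, i) \<Longrightarrow> P" and "\<And>i. i \<in> {1..t} \<Longrightarrow> x = (2, i) \<Longrightarrow> P"
    for x P
    using that unfolding pentV by blast
  have "inj_on g (pentV t)"
  proof (rule inj_on_inverseI)
    fix x assume "x \<in> pentV t"
    then show "(case fst (label_of (g x)) of PartA \<Rightarrow> 0 | PartB \<Rightarrow> 1 | _ \<Rightarrow> 2, fst (snd (label_of (g x)))) = x"
      using a b c by (elim pentV_cases) (simp_all add: g_def label_of_simps)
  qed
  moreover have "g ` pentV t \<subseteq> V"
    using a b c V_eq by (auto simp: pentV g_def)
  moreover have "E (g x) (g y) \<longleftrightarrow> pentE t x y" if "x \<in> pentV t" "y \<in> pentV t" for x y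
    using that by (elim pentV_cases)
      (auto simp: pentE_def pentV_def g_def pentagon_adjacency[OF a b c] E_irrefl doubleton_eq_iff)
  ultimately show ?thesis unfolding has_induced_def by blast
qed

definition non_edge :: "'a \<Rightarrow> 'a \<Rightarrow> bool" where
  "non_edge u v \<longleftrightarrow> u \<in> V \<and> v \<in> V \<and> complement V E u v"

lemma non_edgeI: "u \<in> V \<Longrightarrow> v \<in> V \<Longrightarrow> u \<noteq> v \<Longrightarrow> \<not> E u v \<Longrightarrow> non_edge u v"
  unfolding non_edge_def complement_def by blast

lemma non_edge_path_to_A_via_C:
  assumes "a \<in> A" and "i \<in> {1..t}" and "c \<in> C i" and "v \<in> V" and "v \<notin> C i" and "\<not> E v c"
  shows "non_edge\<^sup>*\<^sup>* v a"
proof -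
  have "a \<in> V" "c \<in> V" using assms(1-3) V_eq by blast+
  moreover have "v \<noteq> c" "c \<noteq> a" using assms(1-3,5) part_exclusive(5) by auto
  ultimately have vc: "non_edge v c" and ca: "non_edge c a"
    using non_edgeI assms(4,6) nonadjacent_parts(1)[OF assms(1-3)] by blast+
  show ?thesis using vc ca by (meson converse_rtranclp_into_rtranclp r_into_rtranclp)
qed

lemma non_edge_path_to_A:
  assumes "2 \<le> t" and "a \<in> A" and "v \<in> V"
  shows "non_edge\<^sup>*\<^sup>* v a"
proof -
  have one: "1 \<in> {1..t}" using assms(1) by simp
  obtain c\<^sub>1 where c\<^sub>1: "c\<^sub>1 \<in> C 1" using villa_parts(4)[OF one] by blast
  have a_V: "a \<in> V" using assms(2) V_eq by blast
  from assms(3) show ?thesis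
  proof (cases rule: vertex_cases)
    case 1
    have "v \<notin> C 1" using 1 part_exclusive(5)[OF one, of v] by blast
    then show ?thesis
      using non_edge_path_to_A_via_C[OF assms(2) one c\<^sub>1 assms(3)] nonadjacent_parts(1)[OF 1 one c\<^sub>1]
      by blast
  next
    case 2
    obtain c where c: "c \<in> C j" using villa_parts(4)[OF j] by blast
    have "v \<notin> C j" using 2 part_exclusive(5)[OF j, of v] by blast
    then show ?thesis
      using non_edge_path_to_A_via_C[OF assms(2) j c assms(3)] adjacency_by_index(2)[OF j 2 c] by blast
  next
    case 3
    have "v \<notin> C 1" using 3 part_exclusive(5)[OF one, of v] by blast
    then show ?thesis
      using non_edge_path_to_A_via_C[OF assms(2) one c\<^sub>1 assms(3)] nonadjacent_parts(2)[OF 3 one c\<^sub>1]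
      by blast
  next
    case 4
    have "v \<noteq> a" using 4 part_exclusive(1)[OF assms(2)] by blast
    then have "non_edge v a"
      using non_edgeI[OF assms(3) a_V] nonadjacent_parts(4)[OF 4 assms(2)] by blast
    then show ?thesis by (rule r_into_rtranclp)
  next
    case (5 i)
    obtain k where k: "k \<in> {1..t}" "k \<noteq> i" using other_index[OF assms(1) 5(1)] .
    obtain c where c: "c \<in> C k" using villa_parts(4)[OF k(1)] by blast
    have "\<not> E v c" using B_C_adjacent_iff[OF 5(1) k(1) 5(2) c] k(2) by simp
    then show ?thesis
      using non_edge_path_to_A_via_C[OF assms(2) k(1) c assms(3) part_exclusive(6)[OF 5(1) k(1) 5(2)]]
      by blast
  next
    case (6 i)
    have "v \<noteq> a" using 6 part_exclusive(5)[OF 6(1), of v] assms(2) by blast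
    then have "non_edge v a"
      using non_edgeI[OF assms(3) a_V] nonadjacent_parts(1)[OF assms(2) 6] by blast
    then show ?thesis by (rule r_into_rtranclp)
  qed
qed

lemma anticonnected:
  assumes "2 \<le> t"
  shows "anticonnected V E"
proof -
  obtain a where "a \<in> A" using villa_parts(1) by blast
  then show ?thesis
    unfolding anticonnected_def using non_edge_path_to_A[OF assms, unfolded non_edge_def[abs_def]]
    by (intro connected_graph_if_hub[where h = a]) (auto simp: complement_def E_commute)
qed

lemma villa_vertex_center_of_induced_P3:
  assumes "2 \<le> t" and "v \<in> A \<or> (\<exists>i\<in>{1..t}. v \<in> B i \<or> v \<in> C i)"
  obtains p q where "E v p" and "E v q" and "p \<noteq> q" and "\<not> E p q"
proof -
  have one: "1 \<in> {1..t}" and two: "2 \<in> {1..t}" using assms(1) by simp_all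
  obtain a where a: "a \<in> A" using villa_parts(1) by blast
  consider "v \<in> A" | i where "i \<in> {1..t}" "v \<in> B i" | i where "i \<in> {1..t}" "v \<in> C i"
    using assms(2) by blast
  then show thesis
  proof cases
    case 1
    obtain b\<^sub>1 b\<^sub>2 where b: "b\<^sub>1 \<in> B 1" "b\<^sub>2 \<in> B 2"
      using villa_parts(3)[OF one] villa_parts(3)[OF two] by blast
    then have "b\<^sub>1 \<notin> B 2" using part_exclusive(7)[OF one two] by auto
    then have "b\<^sub>1 \<noteq> b\<^sub>2" using b by auto
    then show thesis
      using that[of b\<^sub>1 b\<^sub>2] adjacent_parts(6)[OF 1 one b(1)] adjacent_parts(6)[OF 1 two b(2)]
        adjacency_by_index(4)[OF one two b] by auto
  next
    case (2 i)
    obtain c where c: "c \<in> C i" "E v c" using B_has_C_neighbour[OF 2] .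
    show thesis
      using that[of a c] a c adjacent_parts(6)[OF a 2] nonadjacent_parts(1)[OF a 2(1) c(1)]
        part_exclusive(5)[OF 2(1) c(1)] by auto
  next
    case (3 i)
    obtain k where k: "k \<in> {1..t}" "k \<noteq> i" using other_index[OF assms(1) 3(1)] .
    obtain b where b: "b \<in> B i" "C i \<subseteq> nbhd E b" using B_dominating[OF 3(1)] .
    obtain c where c: "c \<in> C k" using villa_parts(4)[OF k(1)] by blast
    have "v \<noteq> c" "b \<noteq> c"
      using 3 c b(1) k part_exclusive(6)[OF 3(1) k(1)] part_exclusive(8)[OF 3(1) k(1)] by auto
    moreover have "E v b" using b 3(2) E_sym unfolding nbhd_def by blast
    ultimately show thesis
      using that[of b c] adjacent_parts(5)[OF 3(1) k(1) 3(2) c] B_C_adjacent_iff[OF 3(1) k(1) b(1) c] k(2)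
      by auto
  qed
qed

lemma center_of_induced_P3:
  assumes "2 \<le> t" and "v \<in> V"
  obtains p q where "E v p" and "E v q" and "p \<noteq> q" and "\<not> E p q"
proof -
  obtain a where a: "a \<in> A" using villa_parts(1) by blast
  obtain f where f: "f \<in> F" using F_nonempty by blast
  from assms(2) show thesis
  proof (cases rule: vertex_cases)
    case 2
    obtain k where k: "k \<in> {1..t}" "k \<noteq> j" using other_index[OF assms(1) j] .
    obtain c where c: "c \<in> C k" using villa_parts(4)[OF k(1)] by blast
    show thesis
      using that[of a c] a c adjacent_parts(7)[OF 2 a] adjacency_by_index(2)[OF k(1) 2 c] k(2)
        nonadjacent_parts(1)[OF a k(1) c] part_exclusive(5)[OF k(1) c] by auto
  next
    case 3
    obtain b where b: "b \<in> B j" using villa_parts(3)[OF j] by blast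
    show thesis
      using that[of f b] f b adjacent_parts(8)[OF f 3] adjacency_by_index(3)[OF j 3 b]
        adjacency_by_index(1)[OF j f b] part_exclusive(4)[OF j b] by auto
  next
    case 4
    obtain c where c: "c \<in> C j" using villa_parts(4)[OF j] by blast
    show thesis
      using that[of f c] f c adjacent_parts(9)[OF f 4] adjacent_parts(11)[OF 4 j c]
        adjacency_by_index(2)[OF j f c] part_exclusive(5)[OF j c] by auto
  qed (use villa_vertex_center_of_induced_P3[OF assms(1)] that in blast)+
qed

lemma no_simplicial_vertex:
  assumes "2 \<le> t" and "v \<in> V"
  shows "\<not> simplicial V E v"
  using center_of_induced_P3[OF assms] not_simplicial_if_center_of_P3[OF graph] by metis

lemma no_universal_vertex:
  assumes "2 \<le> t" and "v \<in> V"
  shows "\<not> universal V E v"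
proof -
  have one: "1 \<in> {1..t}" using assms(1) by simp
  obtain a c where "a \<in> A" "c \<in> C 1" using villa_parts(1) villa_parts(4)[OF one] by blast
  moreover from this have "a \<in> V" "c \<in> V" "a \<noteq> c" using one V_eq part_exclusive(5)[OF one] by auto
  ultimately obtain u where "u \<in> V" "u \<noteq> v" by metis
  then show ?thesis using not_universal_if_anticonnected[OF anticonnected[OF assms(1)] _ assms(2)] by blast
qed

end

theorem proposition5p4:
  fixes V :: "'a set" and E :: "'a \<Rightarrow> 'a \<Rightarrow> bool" and t :: nat
  assumes "t \<ge> 3" and "mansion V E t"
  shows "\<not> has_induced V E twoP3V twoP3E \<and>
         \<not> has_induced V E (cycV 4) (cycE 4) \<and>
         \<not> has_induced V E (cycV 6) (cycE 6) \<and>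
         \<not> has_induced V E (cycV 7) (cycE 7) \<and>
         \<not> has_induced V E T0V T0E \<and>
         has_induced V E (pentV t) (pentE t) \<and>
         anticonnected V E \<and>
         (\<forall>v\<in>V. \<not> simplicial V E v \<and> \<not> universal V E v)"
proof -
  obtain A B C F X Y j where "mansion_partition V E t A B C F X Y j"
    using assms(2) by (rule mansion_partition_if_mansion)
  then interpret mansion_partition V E t A B C F X Y j .
  have t: "2 \<le> t" using assms(1) by simp
  have "\<not> has_induced V E T0V T0E"
    using not_has_induced_if_label_graph_free[OF label_graph_C5_K1_free]
      has_induced_trans[OF _ T0_has_induced_C5_K1] by blast
  then show ?thesis
    using not_has_induced_if_label_graph_free[OF label_graph_2P3_free]
      not_has_induced_if_label_graph_free[OF label_graph_C4_free]
      not_has_induced_if_label_graph_free[OF label_graph_C6_free]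
      not_has_induced_if_label_graph_free[OF label_graph_C7_free]
      has_induced_pentagon anticonnected[OF t] no_simplicial_vertex[OF t] no_universal_vertex[OF t]
    by blast
qed

end
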